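(* The relations $\equiv_{\mathrm{lps}}$ and $\equiv_{\mathrm{rps}}$ are congruences on the free monoid $\mathcal{A}^*$.
   Context: Let $\mathcal{A}=\{1<2<3<\cdots\}$ be the positive integers viewed as a totally ordered alphabet. An lPS tableau is a finite (possibly empty) sequence of nonempty bottom-justified columns of boxes filled with elements of $\mathcal{A}$, such that the entries of each column are strictly decreasing from top to bottom and the bottom entries of the columns form a weakly increasing sequence from left to right. An rPS tableau is defined in the same way but with columns weakly decreasing from top to bottom and the bottom row strictly increasing from left to right. Right insertion of a symbol $a$ into an lPS tableau $B$: if $a$ is greater than or equal to every entry of the bottom row, append a new column consisting of $a$ at the right end; otherwise, let $z$ be the leftmost bottom-row entry with $z>a$ and put $a$ in a new box at the bottom of the column of $z$ (the previous entries of that column move up one box). Right insertion into an rPS tableau is the same except that a new column is created iff $a$ is strictly greater than every bottom-row entry, and otherwise $z$ is the leftmost bottom-row entry with $z\geq a$. For a word $w=w_1\cdots w_k$, $\mathfrak{R}_\ell(w)$ (resp. $\mathfrak{R}_r(w)$) is obtained by starting with the empty lPS (resp. rPS) tableau and right-inserting $w_1,\dots,w_k$ in order. Define $u\equiv_{\mathrm{lps}}v\iff\mathfrak{R}_\ell(u)=\mathfrak{R}_\ell(v)$ and $u\equiv_{\mathrm{rps}}v\iff\mathfrak{R}_r(u)=\mathfrak{R}_r(v)$ for $u,v\in\mathcal{A}^*$. *)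

theory Defs
  imports Main
begin

text \<open>The alphabet A = positive integers, represented by nat with entries > 0.
  A word is a list. A PS tableau is a list of columns (left to right);
  each column is a nonempty list of entries read from top to bottom,
  so the bottom entry of a column is its last element.\<close>

type_synonym word = "nat list"
type_synonym column = "nat list"
type_synonym tableau = "column list"

definition word_over_A :: "word \<Rightarrow> bool" where
  "word_over_A w \<longleftrightarrow> (\<forall>x\<in>set w. 0 < x)"

definition bottom_row :: "tableau \<Rightarrow> nat list" where
  "bottom_row T = map last T"

fun lps_insert :: "tableau \<Rightarrow> nat \<Rightarrow> tableau" where
  "lps_insert [] a = [[a]]"
| "lps_insert (c # T) a =
     (if a < last c then (c @ [a]) # T else c # lps_insert T a)"

fun rps_insert :: "tableau \<Rightarrow> nat \<Rightarrow> tableau" where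
  "rps_insert [] a = [[a]]"
| "rps_insert (c # T) a =
     (if a \<le> last c then (c @ [a]) # T else c # rps_insert T a)"

definition R_l :: "word \<Rightarrow> tableau" where
  "R_l w = foldl lps_insert [] w"

definition R_r :: "word \<Rightarrow> tableau" where
  "R_r w = foldl rps_insert [] w"

definition lps_equiv :: "word \<Rightarrow> word \<Rightarrow> bool" where
  "lps_equiv u v \<longleftrightarrow> R_l u = R_l v"

definition rps_equiv :: "word \<Rightarrow> word \<Rightarrow> bool" where
  "rps_equiv u v \<longleftrightarrow> R_r u = R_r v"

definition is_congruence :: "(word \<Rightarrow> word \<Rightarrow> bool) \<Rightarrow> bool" where
  "is_congruence E \<longleftrightarrow>
     (\<forall>u. word_over_A u \<longrightarrow> E u u) \<and>
     (\<forall>u v. word_over_A u \<longrightarrow> word_over_A v \<longrightarrow> E u v \<longrightarrow> E v u) \<and>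
     (\<forall>u v w. word_over_A u \<longrightarrow> word_over_A v \<longrightarrow> word_over_A w \<longrightarrow>
         E u v \<longrightarrow> E v w \<longrightarrow> E u w) \<and>
     (\<forall>u v x y. word_over_A u \<longrightarrow> word_over_A v \<longrightarrow> word_over_A x \<longrightarrow> word_over_A y \<longrightarrow>
         E u v \<longrightarrow> E (x @ u @ y) (x @ v @ y))"

end

theory Submission
  imports Defs
begin

text \<open>Read a tableau column by column, each column from top to bottom. Inserting this reading
  word into any tableau has the same effect as inserting the tableau's own letters. When the
  last letter a of a word settles below a column with bottom b, every letter read after b
  (i.e. in later columns) passes over that column, so it cannot interact with a and the two
  insertions commute. Hence the tableau of x u depends only on the tableaux of x and u, which
  gives compatibility with left multiplication; right multiplication is immediate since
  building a tableau is a left fold.\<close>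

fun ps_insert :: "('a \<Rightarrow> 'a \<Rightarrow> bool) \<Rightarrow> 'a list list \<Rightarrow> 'a \<Rightarrow> 'a list list" where
  "ps_insert below [] a = [[a]]"
| "ps_insert below (c # T) a =
     (if below a (last c) then (c @ [a]) # T else c # ps_insert below T a)"

lemma lps_insert_eq_ps_insert: "lps_insert = ps_insert (<)"
proof (intro ext)
  show "lps_insert T a = ps_insert (<) T a" for T a
    by (induction T) auto
qed

lemma rps_insert_eq_ps_insert: "rps_insert = ps_insert (\<le>)"
proof (intro ext)
  show "rps_insert T a = ps_insert (\<le>) T a" for T a
    by (induction T) auto
qed

text \<open>The part of the PS tableau conditions the argument needs.\<close>
fun ps_valid :: "('a \<Rightarrow> 'a \<Rightarrow> bool) \<Rightarrow> 'a list list \<Rightarrow> bool" where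
  "ps_valid below [] = True"
| "ps_valid below (c # T) =
     (c \<noteq> [] \<and> (\<forall>y\<in>set (concat T). \<not> below y (last c)) \<and> ps_valid below T)"

fun settles_before :: "('a \<Rightarrow> 'a \<Rightarrow> bool) \<Rightarrow> 'a list list \<Rightarrow> 'a \<Rightarrow> 'a list \<Rightarrow> bool" where
  "settles_before below [] a ys = False"
| "settles_before below (c # T) a ys =
     ((\<forall>y\<in>set ys. \<not> below y (last c)) \<and> (below a (last c) \<or> settles_before below T a ys))"

locale ps_insertion =
  fixes below :: "'a \<Rightarrow> 'a \<Rightarrow> bool"
  assumes not_below_if_below: "below a b \<Longrightarrow> \<not> below y b \<Longrightarrow> \<not> below y a"
    and not_below_trans: "\<not> below b z \<Longrightarrow> \<not> below y b \<Longrightarrow> \<not> below y z"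
begin

abbreviation ins :: "'a list list \<Rightarrow> 'a \<Rightarrow> 'a list list" where
  "ins \<equiv> ps_insert below"

lemma set_concat_ins: "set (concat (ins T a)) = insert a (set (concat T))"
  by (induction T) auto

lemma ps_valid_ins: "ps_valid below T \<Longrightarrow> ps_valid below (ins T a)"
proof (induction T)
  case Nil
  then show ?case by simp
next
  case (Cons c T)
  show ?case
  proof (cases "below a (last c)")
    case True
    have "\<not> below y a" if "y \<in> set (concat T)" for y
      using that Cons.prems not_below_if_below[OF True] by (simp del: set_concat)
    then show ?thesis using Cons.prems True by simp
  next
    case False
    then show ?thesis using Cons by (simp add: set_concat_ins del: set_concat)
  qed
qed

lemma ps_valid_foldl_ins: "ps_valid below (foldl ins [] u)"
  by (induction u rule: rev_induct) (auto intro: ps_valid_ins)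

lemma ins_commute_if_settles_before:
  assumes "settles_before below T a (y # ys)"
  shows "ins (ins T a) y = ins (ins T y) a \<and> settles_before below (ins T y) a ys"
  using assms
proof (induction T)
  case Nil
  then show ?case by simp
next
  case (Cons c T)
  show ?case
  proof (cases "below a (last c)")
    case True
    with Cons.prems have "\<not> below y (last c)" by simp
    with True have "\<not> below y a" using not_below_if_below by blast
    with True Cons.prems \<open>\<not> below y (last c)\<close> show ?thesis by auto
  next
    case False
    with Cons show ?thesis by auto
  qed
qed

lemma foldl_ins_commute_if_settles_before:
  "settles_before below T a ys \<Longrightarrow> foldl ins (ins T a) ys = ins (foldl ins T ys) a"
proof (induction ys arbitrary: T)
  case Nil
  then show ?case by simp
next
  case (Cons y ys)
  from ins_commute_if_settles_before[OF Cons.prems] Cons.IH show ?case by simp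
qed

lemma settles_before_after_ins:
  "below a b \<Longrightarrow> \<forall>y\<in>set ys. \<not> below y b \<Longrightarrow> settles_before below (ins T b) a ys"
proof (induction T)
  case Nil
  then show ?case by simp
next
  case (Cons c T)
  show ?case
  proof (cases "below b (last c)")
    case True
    then show ?thesis using Cons.prems by simp
  next
    case False
    then have "\<forall>y\<in>set ys. \<not> below y (last c)"
      using Cons.prems(2) not_below_trans by blast
    with False Cons show ?thesis by simp
  qed
qed

lemma foldl_ins_concat_ins:
  "ps_valid below S \<Longrightarrow>
    foldl ins T (concat (ins S a)) = ins (foldl ins T (concat S)) a"
proof (induction S arbitrary: T)
  case Nil
  then show ?case by simp
next
  case (Cons c S)
  show ?case
  proof (cases "below a (last c)")
    case True
    from Cons.prems have "c \<noteq> []" and later: "\<forall>y\<in>set (concat S). \<not> below y (last c)"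
      by auto
    then obtain c' where c: "c = c' @ [last c]" by (metis append_butlast_last_id)
    let ?U = "ins (foldl ins T c') (last c)"
    have "foldl ins T (concat (ins (c # S) a)) = foldl ins (ins ?U a) (concat S)"
      using True by (subst c) simp
    also have "\<dots> = ins (foldl ins ?U (concat S)) a"
      using foldl_ins_commute_if_settles_before[OF settles_before_after_ins[OF True later]] .
    also have "\<dots> = ins (foldl ins T (concat (c # S))) a"
      by (subst (2) c) simp
    finally show ?thesis .
  next
    case False
    with Cons show ?thesis by simp
  qed
qed

lemma foldl_ins_reading:
  "foldl ins T u = foldl ins T (concat (foldl ins [] u))"
proof (induction u rule: rev_induct)
  case Nil
  then show ?case by simp
next
  case (snoc a u)
  have "foldl ins T (u @ [a]) = ins (foldl ins T (concat (foldl ins [] u))) a"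
    using snoc.IH by simp
  also have "\<dots> = foldl ins T (concat (foldl ins [] (u @ [a])))"
    using foldl_ins_concat_ins[OF ps_valid_foldl_ins] by simp
  finally show ?case .
qed

lemma foldl_ins_append_cong:
  assumes "foldl ins [] u = foldl ins [] v"
  shows "foldl ins [] (x @ u @ y) = foldl ins [] (x @ v @ y)"
proof -
  have "foldl ins (foldl ins [] x) u = foldl ins (foldl ins [] x) v"
    using foldl_ins_reading[of "foldl ins [] x" u] foldl_ins_reading[of "foldl ins [] x" v]
      assms by metis
  then show ?thesis by simp
qed

end

lemma is_congruence_same_ps_tableau:
  fixes below :: "nat \<Rightarrow> nat \<Rightarrow> bool"
  assumes "ps_insertion below"
  shows "is_congruence (\<lambda>u v. foldl (ps_insert below) [] u = foldl (ps_insert below) [] v)"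
  unfolding is_congruence_def
proof (intro conjI allI impI)
  show "foldl (ps_insert below) [] (x @ u @ y) = foldl (ps_insert below) [] (x @ v @ y)"
    if "foldl (ps_insert below) [] u = foldl (ps_insert below) [] v" for u v x y
    using ps_insertion.foldl_ins_append_cong[OF assms that] .
qed auto

lemma ps_insertion_less: "ps_insertion ((<) :: 'a::linorder \<Rightarrow> 'a \<Rightarrow> bool)"
  by unfold_locales auto

lemma ps_insertion_le: "ps_insertion ((\<le>) :: 'a::linorder \<Rightarrow> 'a \<Rightarrow> bool)"
  by unfold_locales auto

theorem proposition3p21:
  shows "is_congruence lps_equiv \<and> is_congruence rps_equiv"
proof
  have "lps_equiv = (\<lambda>u v. foldl (ps_insert (<)) [] u = foldl (ps_insert (<)) [] v)"
    by (intro ext) (simp add: lps_equiv_def R_l_def lps_insert_eq_ps_insert)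
  then show "is_congruence lps_equiv"
    using is_congruence_same_ps_tableau[OF ps_insertion_less] by simp
  have "rps_equiv = (\<lambda>u v. foldl (ps_insert (\<le>)) [] u = foldl (ps_insert (\<le>)) [] v)"
    by (intro ext) (simp add: rps_equiv_def R_r_def rps_insert_eq_ps_insert)
  then show "is_congruence rps_equiv"
    using is_congruence_same_ps_tableau[OF ps_insertion_le] by simp
qed

end
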